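(* Let $J\ge1$, $K,L\ge 0$, $p,q,n_1,\dots,n_J\ge1$, $n=\sum_j n_j$, $\mathbf X_\cdot\in\mathbb R^{p\times n}$, $\mathbf Y_\cdot=[\mathbf Y_1,\dots,\mathbf Y_J]\in\mathbb R^{q\times n}$ with $\mathbf Y_j\in\mathbb R^{q\times n_j}$, binary matrices $\mathbf C_Y\in\{0,1\}^{J\times K}$, $\mathbf C_S\in\{0,1\}^{J\times L}$, and penalties $\lambda_B^{(k)}>0$, $\lambda_S^{(l)}>0$. Define $\mathbf Y_\cdot^{(k)}=[\mathbf Y_1^{(k)},\dots,\mathbf Y_J^{(k)}]$ with $\mathbf Y_j^{(k)}=\mathbf Y_j$ if $\mathbf C_Y[j,k]=1$ and $\mathbf 0_{q\times n_j}$ otherwise; let $\mathcal S_l$ be the set of $p\times n$ matrices whose $j$-th column block (of width $n_j$) is zero whenever $\mathbf C_S[j,l]=0$. Let $$f(\{\mathbf B_k\},\{\mathbf S^{(l)}\})=\tfrac12\Big\|\mathbf X_\cdot-\sum_{k}\mathbf B_k\mathbf Y_\cdot^{(k)}-\sum_{l}\mathbf S^{(l)}\Big\|_F^2+\sum_k\lambda_B^{(k)}\|\mathbf B_k\|_*+\sum_l\lambda_S^{(l)}\|\mathbf S^{(l)}\|_*$$ over $\mathbf B_k\in\mathbb R^{p\times q}$, $\mathbf S^{(l)}\in\mathcal S_l$. The following conditions are needed to allow non-zero estimation of the modules, in the sense that if a listed condition fails, then for every minimizer of $f$ there is another minimizer of $f$ (with objective value no larger) in which the indicated module is zero: 1.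 (module $\mathbf B_k$) Let $\mathcal I_k\subset\{1,\dots,K\}\setminus\{k\}$ be any set with $\sum_{i\in\mathcal I_k}\mathbf C_Y[\cdot,i]=c_y\,\mathbf C_Y[\cdot,k]$ for some positive integer $c_y$. Then $\lambda_B^{(k)}<\frac1{c_y}\sum_{i\in\mathcal I_k}\lambda_B^{(i)}$. 2. (module $\mathbf B_k$) Let $\mathcal I_k\subset\{1,\dots,L\}$ be any set with $\sum_{i\in\mathcal I_k}\mathbf C_S[\cdot,i]=c_{sy}\,\mathbf C_Y[\cdot,k]$ for some positive integer $c_{sy}$. Then $\lambda_B^{(k)}<\frac1{c_{sy}}\sum_{i\in\mathcal I_k}\lambda_S^{(i)}\|\mathbf Y_\cdot^{(k)}\|_*$. 3. (module $\mathbf S^{(l')}$) For $l\ne l'$ with $\mathbf C_S[j,l]\ge\mathbf C_S[j,l']$ for all $j$: $\lambda_S^{(l')}<\lambda_S^{(l)}$. 4. (module $\mathbf S^{(l)}$) Let $\mathcal I_l\subset\{1,\dots,L\}\setminus\{l\}$ be any set with $\sum_{i\in\mathcal I_l}\mathbf C_S[\cdot,i]=c_s\,\mathbf C_S[\cdot,l]$ for some positive integer $c_s$. Then $\lambda_S^{(l)}<\frac1{c_s}\sum_{i\in\mathcal I_l}\lambda_S^{(i)}$.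
   Context: $\|\cdot\|_*$ is the nuclear norm and $\|\cdot\|_F$ the Frobenius norm; $\mathbf C[\cdot,i]$ denotes the $i$-th column of $\mathbf C$. The indicator matrices specify on which cohorts (column blocks) each module is present. *)

theory Defs
  imports "Jordan_Normal_Form.Char_Poly"
begin

definition frob_norm :: "real mat \<Rightarrow> real" where
  "frob_norm A = sqrt (\<Sum>i<dim_row A. \<Sum>j<dim_col A. (A $$ (i,j))\<^sup>2)"

text \<open>Nuclear norm = sum of the singular values, the singular values being the square
  roots of the eigenvalues of A^T A, counted with (algebraic) multiplicity.\<close>
definition nuc_norm :: "real mat \<Rightarrow> real" where
  "nuc_norm A = (let P = char_poly (transpose_mat A * A) in
     \<Sum>x\<in>{x. poly P x = 0}. real (order x P) * sqrt x)"

text \<open>Column c (0-based) lies in the j-th column block (0-based), blocks having widths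
  nj 0, nj 1, ... placed consecutively.\<close>
definition in_block :: "(nat \<Rightarrow> nat) \<Rightarrow> nat \<Rightarrow> nat \<Rightarrow> bool" where
  "in_block nj j c \<longleftrightarrow> (\<Sum>i<j. nj i) \<le> c \<and> c < (\<Sum>i<Suc j. nj i)"

definition mod_data :: "nat \<Rightarrow> (nat \<Rightarrow> nat) \<Rightarrow> (nat \<Rightarrow> nat \<Rightarrow> nat) \<Rightarrow> nat \<Rightarrow> real mat \<Rightarrow> real mat" where
  "mod_data J nj C k Y = mat (dim_row Y) (dim_col Y)
     (\<lambda>(r,c). if (\<exists>j<J. in_block nj j c \<and> C j k = 1) then Y $$ (r,c) else 0)"

definition S_set :: "nat \<Rightarrow> nat \<Rightarrow> nat \<Rightarrow> (nat \<Rightarrow> nat) \<Rightarrow> (nat \<Rightarrow> nat \<Rightarrow> nat) \<Rightarrow> nat \<Rightarrow> real mat set" where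
  "S_set p n J nj C l = {S \<in> carrier_mat p n.
     \<forall>j<J. C j l = 0 \<longrightarrow> (\<forall>r<p. \<forall>c<n. in_block nj j c \<longrightarrow> S $$ (r,c) = 0)}"

definition feasible :: "nat \<Rightarrow> nat \<Rightarrow> nat \<Rightarrow> nat \<Rightarrow> (nat \<Rightarrow> nat) \<Rightarrow> nat \<Rightarrow> nat \<Rightarrow>
    (nat \<Rightarrow> nat \<Rightarrow> nat) \<Rightarrow> (nat \<Rightarrow> real mat) \<Rightarrow> (nat \<Rightarrow> real mat) \<Rightarrow> bool" where
  "feasible p q n J nj K L CS B S \<longleftrightarrow>
     (\<forall>k<K. B k \<in> carrier_mat p q) \<and> (\<forall>l<L. S l \<in> S_set p n J nj CS l)"

definition obj :: "nat \<Rightarrow> nat \<Rightarrow> nat \<Rightarrow> (nat \<Rightarrow> nat) \<Rightarrow> nat \<Rightarrow> nat \<Rightarrow> (nat \<Rightarrow> nat \<Rightarrow> nat) \<Rightarrow>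
    real mat \<Rightarrow> real mat \<Rightarrow> (nat \<Rightarrow> real) \<Rightarrow> (nat \<Rightarrow> real) \<Rightarrow>
    (nat \<Rightarrow> real mat) \<Rightarrow> (nat \<Rightarrow> real mat) \<Rightarrow> real" where
  "obj p n J nj K L CY X Y lamB lamS B S =
     (1/2) * (frob_norm (mat p n (\<lambda>(r,c). X $$ (r,c)
                - (\<Sum>k<K. (B k * mod_data J nj CY k Y) $$ (r,c))
                - (\<Sum>l<L. S l $$ (r,c)))))\<^sup>2
     + (\<Sum>k<K. lamB k * nuc_norm (B k))
     + (\<Sum>l<L. lamS l * nuc_norm (S l))"

definition is_minimizer where
  "is_minimizer p q n J nj K L CY CS X Y lamB lamS B S \<longleftrightarrow>
     feasible p q n J nj K L CS B S \<and>
     (\<forall>B' S'. feasible p q n J nj K L CS B' S' \<longrightarrow>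
        obj p n J nj K L CY X Y lamB lamS B S \<le> obj p n J nj K L CY X Y lamB lamS B' S')"

end

theory Submission
  imports Defs "HOL-Analysis.L2_Norm"
begin

(* The four conditions are necessary because, whenever one of them fails, the module in question
   can be switched off by redistributing it.  Its contribution to the fit is moved, scaled by 1/c
   and restricted to the appropriate cohorts, onto the modules indexed by I (in condition 3 onto
   the larger module S^(l)).  As the indicator columns of the receiving modules add up to c times
   those of the donor, the residual is unchanged; the penalty does not increase by the triangle
   inequality, homogeneity and submultiplicativity of the nuclear norm and because zeroing
   columns does not increase it.  The new point is feasible, hence again a minimizer.

   The nuclear norm is defined through the eigenvalues of A^T A.  The properties just used follow
   from its characterisation as the least cost sum_j |x_j| |y_j| of a decomposition
   A = sum_j x_j y_j^T, which rests on the orthogonal diagonalisation of real symmetric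
   matrices. *)

lemma index_mult_mat_sum:
  assumes "A \<in> carrier_mat m k" "B \<in> carrier_mat k n" "i < m" "j < n"
  shows "(A * B) $$ (i,j) = (\<Sum>l<k. A $$ (i,l) * B $$ (l,j))"
  using assms by (auto simp: scalar_prod_def atLeast0LessThan intro!: sum.cong)

lemma index_transpose_mult_sum:
  assumes "A \<in> carrier_mat k m" "B \<in> carrier_mat k n" "i < m" "j < n"
  shows "(A\<^sup>T * B) $$ (i,j) = (\<Sum>l<k. A $$ (l,i) * B $$ (l,j))"
  using assms by (subst index_mult_mat_sum[of _ m k _ n]) auto

lemma index_add_smult_mult_mat:
  assumes "A \<in> carrier_mat p q" "B \<in> carrier_mat p q" "Z \<in> carrier_mat q n" "r < p" "c < n"
  shows "((A + a \<cdot>\<^sub>m B) * Z) $$ (r,c) = (A * Z) $$ (r,c) + a * (B * Z) $$ (r,c)"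
  using assms by (simp add: add_mult_distrib_mat[of _ p q] smult_scalar_prod_distrib[of _ q])

lemma symmetric_mat_entry:
  assumes "M \<in> carrier_mat n n" "M\<^sup>T = M" "i < n" "j < n"
  shows "M $$ (i,j) = M $$ (j,i)"
  using assms by (metis carrier_matD index_transpose_mat(1))

section \<open>Orthogonal diagonalisation of real symmetric matrices\<close>

lemma symmetric_sesquilinear_form_real:
  fixes M :: "real mat" and z :: "complex vec"
  assumes "M \<in> carrier_mat n n" "M\<^sup>T = M"
  shows "cnj (\<Sum>i<n. \<Sum>j<n. cnj (z $ i) * of_real (M $$ (i,j)) * z $ j)
    = (\<Sum>i<n. \<Sum>j<n. cnj (z $ i) * of_real (M $$ (i,j)) * z $ j)"
proof -
  have "cnj (\<Sum>i<n. \<Sum>j<n. cnj (z $ i) * of_real (M $$ (i,j)) * z $ j)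
      = (\<Sum>j<n. \<Sum>i<n. z $ i * of_real (M $$ (i,j)) * cnj (z $ j))"
    unfolding cnj_sum by (subst sum.swap) simp
  also have "\<dots> = (\<Sum>i<n. \<Sum>j<n. cnj (z $ i) * of_real (M $$ (i,j)) * z $ j)"
    using symmetric_mat_entry[OF assms] by (intro sum.cong refl) (simp add: mult_ac)
  finally show ?thesis .
qed

lemma char_poly_symmetric_has_real_root:
  fixes M :: "real mat"
  assumes M: "M \<in> carrier_mat n n" and n: "n > 0" and sym: "M\<^sup>T = M"
  shows "\<exists>e. poly (char_poly M) e = 0"
proof -
  define Mc where "Mc = (of_real_hom.mat_hom M :: complex mat)"
  have Mc: "Mc \<in> carrier_mat n n" using M unfolding Mc_def by auto
  from char_poly_factorized[OF Mc] obtain as where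
    cp: "char_poly Mc = (\<Prod>a\<leftarrow>as. [:- a, 1:])" and len: "length as = n" by auto
  from len n obtain a rest where "as = a # rest" by (cases as) auto
  then have root: "poly (char_poly Mc) a = 0" unfolding cp by simp
  then have "eigenvalue Mc a" using eigenvalue_root_char_poly[OF Mc] by simp
  then obtain z where "eigenvector Mc z a" unfolding eigenvalue_def by auto
  then have z: "z \<in> carrier_vec n" and z0: "z \<noteq> 0\<^sub>v n" and eq: "Mc *\<^sub>v z = a \<cdot>\<^sub>v z"
    using Mc unfolding eigenvector_def by auto
  \<comment> \<open>\<open>a\<close> is the Rayleigh quotient \<open>s / N\<close>, whose numerator and denominator are real.\<close>
  define s where "s = (\<Sum>i<n. \<Sum>j<n. cnj (z $ i) * of_real (M $$ (i,j)) * z $ j)"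
  define N where "N = (\<Sum>i<n. (cmod (z $ i))\<^sup>2)"
  have row: "(\<Sum>j<n. of_real (M $$ (i,j)) * z $ j) = a * z $ i" if "i < n" for i
    using arg_cong[OF eq, of "\<lambda>w. w $ i"] that Mc z M
    by (simp add: Mc_def scalar_prod_def atLeast0LessThan)
  have "s = (\<Sum>i<n. cnj (z $ i) * (\<Sum>j<n. of_real (M $$ (i,j)) * z $ j))"
    unfolding s_def by (simp add: sum_distrib_left mult.assoc)
  also have "\<dots> = (\<Sum>i<n. cnj (z $ i) * (a * z $ i))" by (simp add: row)
  also have "\<dots> = a * of_real N"
    unfolding N_def of_real_sum complex_norm_square by (simp add: sum_distrib_left mult_ac)
  finally have s_eq: "s = a * of_real N" .
  from z0 z obtain i where "i < n" "z $ i \<noteq> 0" by (metis carrier_vecD eq_vecI index_zero_vec(1,2))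
  then have "N > 0" unfolding N_def by (intro sum_pos2[of _ i]) auto
  then have "a = s / of_real N" using s_eq by simp
  then have "Im a = 0"
    using symmetric_sesquilinear_form_real[OF M sym, of z] unfolding s_def[symmetric]
    by (simp add: complex_eq_iff)
  then have "a = of_real (Re a)" by (simp add: complex_eq_iff)
  moreover have "of_real (poly (char_poly M) (Re a)) = poly (char_poly Mc) (of_real (Re a))"
    unfolding Mc_def of_real_hom.char_poly_hom[OF M] by simp
  ultimately show ?thesis using root by (metis of_real_eq_0_iff)
qed

lemma symmetric_unit_eigenvector:
  fixes M :: "real mat"
  assumes M: "M \<in> carrier_mat n n" and n: "n > 0" and sym: "M\<^sup>T = M"
  shows "\<exists>e v. v \<in> carrier_vec n \<and> v \<bullet> v = 1 \<and> M *\<^sub>v v = e \<cdot>\<^sub>v v"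
proof -
  from char_poly_symmetric_has_real_root[OF M n sym] obtain e where "poly (char_poly M) e = 0" ..
  then have "eigenvalue M e" using eigenvalue_root_char_poly[OF M] by simp
  then obtain w where "eigenvector M w e" unfolding eigenvalue_def by auto
  then have w: "w \<in> carrier_vec n" and w0: "w \<noteq> 0\<^sub>v n" and eq: "M *\<^sub>v w = e \<cdot>\<^sub>v w"
    using M unfolding eigenvector_def by auto
  have pos: "w \<bullet> w > 0"
    using conjugate_square_greater_0_vec[OF w] w0 by simp
  define v where "v = (1 / sqrt (w \<bullet> w)) \<cdot>\<^sub>v w"
  have v: "v \<in> carrier_vec n" unfolding v_def using w by simp
  have "v \<bullet> v = (w \<bullet> w) / (sqrt (w \<bullet> w))\<^sup>2"
    unfolding v_def using w by (simp add: power2_eq_square)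
  also have "\<dots> = 1" using pos by simp
  finally have "v \<bullet> v = 1" .
  moreover have "M *\<^sub>v v = e \<cdot>\<^sub>v v"
    unfolding v_def using M w eq by (simp add: mult_mat_vec smult_smult_assoc mult.commute)
  ultimately show ?thesis using v by blast
qed

lemma reflection_mat_orthogonal:
  fixes u :: "nat \<Rightarrow> real"
  assumes c: "c * c * (\<Sum>k<n. (u k)\<^sup>2) = 2 * c"
  defines "W \<equiv> mat n n (\<lambda>(i,j). of_bool (i = j) - c * u i * u j)"
  shows "W\<^sup>T * W = 1\<^sub>m n"
proof (rule eq_matI)
  have W: "W \<in> carrier_mat n n" unfolding W_def by simp
  have sum_\<delta>: "(\<Sum>k<n. of_bool (k = i) * f k) = f i" if "i < n" for i and f :: "nat \<Rightarrow> real"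
  proof -
    have "{..<n} \<inter> {k. k = i} = {i}" using that by auto
    then show ?thesis by simp
  qed
  fix i j assume "i < dim_row (1\<^sub>m n :: real mat)" "j < dim_col (1\<^sub>m n :: real mat)"
  then have i: "i < n" and j: "j < n" by auto
  have "(W\<^sup>T * W) $$ (i,j)
      = (\<Sum>k<n. (of_bool (k = i) - c * u k * u i) * (of_bool (k = j) - c * u k * u j))"
    unfolding index_transpose_mult_sum[OF W W i j] using i j by (intro sum.cong) (auto simp: W_def)
  also have "\<dots> = (\<Sum>k<n. of_bool (k = i) * of_bool (k = j))
      - c * u j * (\<Sum>k<n. of_bool (k = i) * u k) - c * u i * (\<Sum>k<n. of_bool (k = j) * u k)
      + (c * c * (\<Sum>k<n. (u k)\<^sup>2)) * u i * u j"
    by (simp add: sum.distrib sum_subtractf sum_distrib_left power2_eq_square algebra_simps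
        del: sum_of_bool_mult_eq sum_mult_of_bool_eq)
  also have "\<dots> = of_bool (i = j)"
    unfolding sum_\<delta>[OF i] sum_\<delta>[OF j] c by (simp add: algebra_simps)
  finally show "(W\<^sup>T * W) $$ (i,j) = 1\<^sub>m n $$ (i,j)" using i j by simp
qed (simp_all add: W_def)

lemma orthogonal_mat_with_first_col:
  fixes v :: "real vec"
  assumes v: "v \<in> carrier_vec n" and n: "n > 0" and v1: "v \<bullet> v = 1"
  shows "\<exists>W. W \<in> carrier_mat n n \<and> W\<^sup>T * W = 1\<^sub>m n \<and> col W 0 = v"
proof -
  \<comment> \<open>The Householder reflection \<open>1 - c u u\<^sup>T\<close> along \<open>u = v - e\<^sub>0\<close>; it degenerates to the
    identity (\<open>c = 2 / 0 = 0\<close>) when \<open>v = e\<^sub>0\<close>.\<close>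
  define u where "u i = v $ i - of_bool (i = 0)" for i
  define s where "s = (\<Sum>i<n. (u i)\<^sup>2)"
  define c where "c = 2 / s"
  define W where "W = mat n n (\<lambda>(i,j). of_bool (i = j) - c * u i * u j)"
  have W: "W \<in> carrier_mat n n" unfolding W_def by simp
  have "(\<Sum>i<n. (v $ i)\<^sup>2) = 1"
    using v v1 by (simp add: scalar_prod_def power2_eq_square atLeast0LessThan)
  moreover have "s = (\<Sum>i<n. (v $ i)\<^sup>2) - 2 * (\<Sum>i<n. of_bool (i = 0) * v $ i)
      + (\<Sum>i<n. of_bool (i = 0) * of_bool (i = 0))"
    unfolding s_def u_def
    by (simp add: power2_eq_square sum.distrib sum_subtractf sum_distrib_left algebra_simps
        del: sum_of_bool_mult_eq sum_mult_of_bool_eq)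
  moreover have "{..<n} \<inter> {0} = {0}" using n by auto
  ultimately have s_eq: "s = 2 - 2 * v $ 0" by simp
  have "c * c * s = 2 * c" by (cases "s = 0") (simp_all add: c_def)
  then have "W\<^sup>T * W = 1\<^sub>m n" unfolding W_def s_def by (rule reflection_mat_orthogonal)
  moreover have "col W 0 = v"
  proof (rule eq_vecI)
    fix i assume "i < dim_vec v"
    then have i: "i < n" using v by simp
    have "c * u i * u 0 = - u i"
    proof (cases "s = 0")
      case True
      then have "u i = 0" unfolding s_def using sum_nonneg_eq_0_iff[of "{..<n}" "\<lambda>i. (u i)\<^sup>2"] i by simp
      then show ?thesis by simp
    next
      case False
      then have "c * u 0 = -1" using s_eq by (simp add: c_def u_def field_simps)
      then show ?thesis by (metis mult.commute mult.left_commute mult_minus1_right)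
    qed
    then show "col W 0 $ i = v $ i" using i n W by (simp add: W_def u_def)
  qed (use v W in auto)
  ultimately show ?thesis using W by blast
qed

lemma symmetric_deflation:
  fixes M :: "real mat"
  assumes M: "M \<in> carrier_mat (Suc n) (Suc n)" and sym: "M\<^sup>T = M"
  obtains W e A' where "W \<in> carrier_mat (Suc n) (Suc n)" "W\<^sup>T * W = 1\<^sub>m (Suc n)"
    "A' \<in> carrier_mat n n" "A'\<^sup>T = A'"
    "W\<^sup>T * M * W = four_block_mat (mat 1 1 (\<lambda>_. e)) (0\<^sub>m 1 n) (0\<^sub>m n 1) A'"
proof -
  obtain e v where v: "v \<in> carrier_vec (Suc n)" "v \<bullet> v = 1" and ev: "M *\<^sub>v v = e \<cdot>\<^sub>v v"
    using symmetric_unit_eigenvector[OF M _ sym] by auto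
  obtain W where W: "W \<in> carrier_mat (Suc n) (Suc n)" and WW: "W\<^sup>T * W = 1\<^sub>m (Suc n)"
    and Wv: "col W 0 = v"
    using orthogonal_mat_with_first_col[OF v(1) _ v(2)] by auto
  define A where "A = W\<^sup>T * M * W"
  have A: "A \<in> carrier_mat (Suc n) (Suc n)" unfolding A_def using W M by auto
  have A_sym: "A\<^sup>T = A"
    unfolding A_def using W M sym by (simp add: transpose_mult[of _ "Suc n" "Suc n" _ "Suc n"])
  have "col A 0 = (W\<^sup>T * M) *\<^sub>v col W 0"
    unfolding A_def using W M by (intro col_mult2[of _ "Suc n" "Suc n"]) auto
  also have "\<dots> = W\<^sup>T *\<^sub>v (M *\<^sub>v v)"
    unfolding Wv using W M v by (intro assoc_mult_mat_vec[of _ "Suc n" "Suc n"]) auto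
  also have "\<dots> = e \<cdot>\<^sub>v (W\<^sup>T *\<^sub>v col W 0)"
    unfolding ev Wv using W v by (simp add: mult_mat_vec)
  also have "\<dots> = e \<cdot>\<^sub>v col (W\<^sup>T * W) 0"
    by (subst col_mult2[of "W\<^sup>T" "Suc n" "Suc n" W "Suc n" 0]) (use W in auto)
  finally have col0: "col A 0 = e \<cdot>\<^sub>v unit_vec (Suc n) 0" unfolding WW by simp
  have A_col0: "A $$ (i,0) = (if i = 0 then e else 0)" if "i < Suc n" for i
    using arg_cong[OF col0, of "\<lambda>w. w $ i"] that A by simp
  define A' where "A' = mat n n (\<lambda>(i,j). A $$ (Suc i, Suc j))"
  have A': "A' \<in> carrier_mat n n" unfolding A'_def by simp
  have A'_sym: "A'\<^sup>T = A'"
    unfolding A'_def using symmetric_mat_entry[OF A A_sym] by (intro eq_matI) auto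
  have "A = four_block_mat (mat 1 1 (\<lambda>_. e)) (0\<^sub>m 1 n) (0\<^sub>m n 1) A'"
    using A A_col0 symmetric_mat_entry[OF A A_sym, of 0]
    by (intro eq_matI) (auto simp: A'_def)
  then show thesis using that[OF W WW A' A'_sym] unfolding A_def by blast
qed

lemma symmetric_orthogonal_diagonalization:
  fixes M :: "real mat"
  assumes "M \<in> carrier_mat n n" and "M\<^sup>T = M"
  shows "\<exists>Q d. Q \<in> carrier_mat n n \<and> Q\<^sup>T * Q = 1\<^sub>m n \<and> Q\<^sup>T * M * Q = mat_diag n d"
  using assms
proof (induction n arbitrary: M)
  case 0
  then show ?case by (intro exI[of _ "1\<^sub>m 0"] exI) (auto simp: mat_diag_def)
next
  case (Suc n M)
  then have M: "M \<in> carrier_mat (Suc n) (Suc n)" and "M\<^sup>T = M" by auto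
  then obtain W e A' where W: "W \<in> carrier_mat (Suc n) (Suc n)" and WW: "W\<^sup>T * W = 1\<^sub>m (Suc n)"
    and A': "A' \<in> carrier_mat n n" "A'\<^sup>T = A'"
    and A: "W\<^sup>T * M * W = four_block_mat (mat 1 1 (\<lambda>_. e)) (0\<^sub>m 1 n) (0\<^sub>m n 1) A'"
    by (rule symmetric_deflation)
  obtain Q' d where Q': "Q' \<in> carrier_mat n n" and Q'Q': "Q'\<^sup>T * Q' = 1\<^sub>m n"
    and D': "Q'\<^sup>T * A' * Q' = mat_diag n d"
    using Suc.IH[OF A'] by auto
  define P where "P = four_block_mat (1\<^sub>m 1) (0\<^sub>m 1 n) (0\<^sub>m n 1) Q'"
  have P: "P \<in> carrier_mat (Suc n) (Suc n)" unfolding P_def using Q' by auto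
  have PT: "P\<^sup>T = four_block_mat (1\<^sub>m 1) (0\<^sub>m 1 n) (0\<^sub>m n 1) Q'\<^sup>T"
    unfolding P_def using Q' by (simp add: transpose_four_block_mat[of _ 1 1 _ n _ n])
  define Q where "Q = W * P"
  have Q: "Q \<in> carrier_mat (Suc n) (Suc n)" unfolding Q_def using W P by auto
  note assoc = assoc_mult_mat[of _ "Suc n" "Suc n" _ "Suc n" _ "Suc n"] mult_carrier_mat[where n = "Suc n"]
  have QT: "Q\<^sup>T = P\<^sup>T * W\<^sup>T" unfolding Q_def using W P by (rule transpose_mult)
  have "Q\<^sup>T * Q = P\<^sup>T * ((W\<^sup>T * W) * P)"
    unfolding QT unfolding Q_def using W P by (simp add: assoc)
  also have "\<dots> = P\<^sup>T * P" unfolding WW using P by simp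
  also have "\<dots> = 1\<^sub>m (Suc n)"
    unfolding PT unfolding P_def
    by (subst mult_four_block_mat[of _ 1 1 _ n _ n _ _ 1 _ n]) (use Q' Q'Q' in auto)
  finally have QQ: "Q\<^sup>T * Q = 1\<^sub>m (Suc n)" .
  have "Q\<^sup>T * M * Q = P\<^sup>T * (W\<^sup>T * M * W) * P"
    unfolding QT unfolding Q_def using W P M by (simp add: assoc)
  also have "\<dots> = four_block_mat (mat 1 1 (\<lambda>_. e)) (0\<^sub>m 1 n) (0\<^sub>m n 1) (Q'\<^sup>T * A' * Q')"
    unfolding PT A unfolding P_def using Q' A'
    by (simp add: mult_four_block_mat[of _ 1 1 _ n _ n _ _ 1 _ n])
  also have "\<dots> = mat_diag (Suc n) (\<lambda>i. if i = 0 then e else d (i - 1))"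
    unfolding D' by (intro eq_matI) (auto simp: mat_diag_def)
  finally show ?case using Q QQ by blast
qed

section \<open>The nuclear norm as the least cost of a rank-one decomposition\<close>

lemma sum_roots_prod_linear_factors:
  fixes ls :: "real list"
  defines "P \<equiv> \<Prod>a\<leftarrow>ls. [:- a, 1:]"
  shows "(\<Sum>x\<in>{x. poly P x = 0}. real (order x P) * f x) = (\<Sum>a\<leftarrow>ls. f a)"
  unfolding P_def
proof (induction ls)
  case Nil
  then show ?case by simp
next
  case (Cons a ls)
  define P where "P = (\<Prod>a\<leftarrow>ls. [:- a, 1:])"
  define R where "R = {x. poly P x = 0}"
  have P: "P \<noteq> 0" unfolding P_def by (auto simp: prod_list_zero_iff)
  then have R: "finite R" unfolding R_def by (rule poly_roots_finite)
  have order_Cons: "order x ([:- a, 1:] * P) = of_bool (x = a) + order x P" for x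
  proof -
    have nz: "[:- a, 1:] * P \<noteq> 0" using P by (intro no_zero_divisors) simp_all
    show ?thesis unfolding order_mult[OF nz] order_linear' by simp
  qed
  have roots: "{x. poly ([:- a, 1:] * P) x = 0} = insert a R"
    unfolding R_def by auto
  have "(\<Sum>x\<in>{x. poly ([:- a, 1:] * P) x = 0}. real (order x ([:- a, 1:] * P)) * f x)
      = f a + (\<Sum>x\<in>insert a R. real (order x P) * f x)"
    unfolding roots order_Cons using R by (simp add: sum.distrib distrib_right)
  also have "(\<Sum>x\<in>insert a R. real (order x P) * f x) = (\<Sum>x\<in>R. real (order x P) * f x)"
  proof (cases "a \<in> R")
    case False
    then have "order a P = 0" using P by (simp add: R_def order_root)
    then show ?thesis using R False by simp
  qed (simp add: insert_absorb)
  also have "\<dots> = (\<Sum>a\<leftarrow>ls. f a)" using Cons.IH unfolding P_def R_def .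
  finally show ?case unfolding P_def by simp
qed

lemma nuc_norm_eq_sum_sqrt_diag:
  fixes A :: "real mat"
  assumes A: "A \<in> carrier_mat m n" and Q: "Q \<in> carrier_mat n n" and QQ: "Q\<^sup>T * Q = 1\<^sub>m n"
    and D: "Q\<^sup>T * (A\<^sup>T * A) * Q = mat_diag n d"
  shows "nuc_norm A = (\<Sum>i<n. sqrt (d i))"
proof -
  define M where "M = A\<^sup>T * A"
  have M: "M \<in> carrier_mat n n" unfolding M_def using A by simp
  have QQ': "Q * Q\<^sup>T = 1\<^sub>m n" using mat_mult_left_right_inverse[of "Q\<^sup>T" n Q] Q QQ by simp
  have "Q * mat_diag n d * Q\<^sup>T = (Q * Q\<^sup>T) * M * (Q * Q\<^sup>T)"
    unfolding D[folded M_def, symmetric] using Q M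
    by (simp add: assoc_mult_mat[of _ n n _ n _ n] mult_carrier_mat[where n = n])
  also have "\<dots> = M" unfolding QQ' using M by simp
  finally have sim: "similar_mat M (mat_diag n d)"
    using Q M QQ QQ' by (intro similar_matI[of _ _ Q "Q\<^sup>T" n]) auto
  have ut: "upper_triangular (mat_diag n d)" by (simp add: upper_triangular_def mat_diag_def)
  have "char_poly M = char_poly (mat_diag n d)" by (rule char_poly_similar[OF sim])
  also have "\<dots> = (\<Prod>a\<leftarrow>diag_mat (mat_diag n d). [:- a, 1:])"
    by (rule char_poly_upper_triangular[OF mat_diag_dim ut])
  also have "diag_mat (mat_diag n d) = map d [0..<n]"
    by (simp add: diag_mat_def mat_diag_def)
  finally have cp: "char_poly M = (\<Prod>a\<leftarrow>map d [0..<n]. [:- a, 1:])" .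
  have "nuc_norm A = (\<Sum>a\<leftarrow>map d [0..<n]. sqrt a)"
    unfolding nuc_norm_def Let_def M_def[symmetric] cp by (rule sum_roots_prod_linear_factors)
  also have "\<dots> = (\<Sum>i<n. sqrt (d i))"
    by (simp add: interv_sum_list_conv_sum_set_nat atLeast0LessThan)
  finally show ?thesis .
qed

definition dot :: "nat \<Rightarrow> (nat \<Rightarrow> real) \<Rightarrow> (nat \<Rightarrow> real) \<Rightarrow> real" where
  "dot m x y = (\<Sum>r<m. x r * y r)"

lemma dot_commute: "dot m x y = dot m y x"
  unfolding dot_def by (simp add: mult.commute)

lemma dot_self_nonneg: "dot m x x \<ge> 0"
  unfolding dot_def by (simp add: sum_nonneg)

lemma L2_set_lessThan_eq_sqrt_dot: "L2_set x {..<m} = sqrt (dot m x x)"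
  unfolding L2_set_def dot_def by (simp add: power2_eq_square)

lemma abs_dot_le_L2_set: "\<bar>dot m x y\<bar> \<le> L2_set x {..<m} * L2_set y {..<m}"
  unfolding dot_def by (rule order_trans[OF sum_abs]) (simp add: abs_mult L2_set_mult_ineq)

lemma L2_set_scale: "L2_set (\<lambda>r. a * x r) A = \<bar>a\<bar> * L2_set x A"
  unfolding L2_set_def by (simp add: power_mult_distrib real_sqrt_mult sum_distrib_left[symmetric])

lemma bessel_inequality:
  fixes N :: nat
  assumes orth: "\<And>i k. i < N \<Longrightarrow> k < N \<Longrightarrow> i \<noteq> k \<Longrightarrow> dot m (w i) (w k) = 0"
    and unit: "\<And>i. i < N \<Longrightarrow> dot m (w i) (w i) \<le> 1"
  shows "L2_set (\<lambda>i. dot m (w i) x) {..<N} \<le> L2_set x {..<m}"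
proof -
  \<comment> \<open>Expand \<open>0 \<le> \<parallel>x - z\<parallel>\<^sup>2\<close> for the projection-like vector \<open>z = \<Sum>i. \<langle>w i, x\<rangle> w i\<close>.\<close>
  define a where "a i = dot m (w i) x" for i
  define z where "z r = (\<Sum>i<N. a i * w i r)" for r
  have dot_z: "dot m y z = (\<Sum>k<N. a k * dot m y (w k))" for y
    unfolding dot_def z_def sum_distrib_left by (subst sum.swap) (simp add: mult_ac)
  have zx: "dot m z x = (\<Sum>k<N. (a k)\<^sup>2)"
    unfolding dot_commute[of m z] dot_z by (simp add: a_def dot_commute power2_eq_square)
  have wz: "dot m (w k) z = a k * dot m (w k) (w k)" if "k < N" for k
  proof -
    have "dot m (w k) z = (\<Sum>i<N. if i = k then a k * dot m (w k) (w k) else 0)"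
      unfolding dot_z using that orth by (intro sum.cong) auto
    then show ?thesis using that by simp
  qed
  have "dot m z z = (\<Sum>k<N. a k * dot m (w k) z)"
    unfolding dot_z[of z] by (simp add: dot_commute)
  also have "\<dots> = (\<Sum>k<N. (a k)\<^sup>2 * dot m (w k) (w k))"
    by (intro sum.cong) (simp_all add: wz power2_eq_square)
  also have "\<dots> \<le> (\<Sum>k<N. (a k)\<^sup>2)"
    by (intro sum_mono mult_left_le) (simp_all add: unit)
  finally have zz: "dot m z z \<le> (\<Sum>i<N. (a i)\<^sup>2)" .
  have "0 \<le> dot m (\<lambda>r. x r - z r) (\<lambda>r. x r - z r)" by (rule dot_self_nonneg)
  also have "\<dots> = dot m x x - 2 * dot m z x + dot m z z"
    unfolding dot_def by (simp add: algebra_simps sum.distrib sum_subtractf sum_distrib_left)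
  finally have "(\<Sum>i<N. (dot m (w i) x)\<^sup>2) \<le> dot m x x" using zx zz unfolding a_def by linarith
  then show ?thesis using real_sqrt_le_mono by (simp add: L2_set_def dot_def power2_eq_square)
qed

lemma nuc_norm_eq_sum_orthogonal_columns:
  fixes A :: "real mat"
  assumes A: "A \<in> carrier_mat m n"
  obtains Q where "Q \<in> carrier_mat n n" "Q\<^sup>T * Q = 1\<^sub>m n"
    "\<And>i j. i < n \<Longrightarrow> j < n \<Longrightarrow> i \<noteq> j \<Longrightarrow>
       dot m (\<lambda>r. (A * Q) $$ (r,i)) (\<lambda>r. (A * Q) $$ (r,j)) = 0"
    "nuc_norm A = (\<Sum>i<n. L2_set (\<lambda>r. (A * Q) $$ (r,i)) {..<m})"
proof -
  have "(A\<^sup>T * A)\<^sup>T = A\<^sup>T * A" using A by (simp add: transpose_mult[of _ n m _ n])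
  then obtain Q d where Q: "Q \<in> carrier_mat n n" and QQ: "Q\<^sup>T * Q = 1\<^sub>m n"
    and D: "Q\<^sup>T * (A\<^sup>T * A) * Q = mat_diag n d"
    using symmetric_orthogonal_diagonalization[of "A\<^sup>T * A" n] A by auto
  define G where "G = A * Q"
  have G: "G \<in> carrier_mat m n" unfolding G_def using A Q by simp
  have "G\<^sup>T * G = Q\<^sup>T * A\<^sup>T * (A * Q)" unfolding G_def by (simp only: transpose_mult[OF A Q])
  also have "\<dots> = Q\<^sup>T * (A\<^sup>T * (A * Q))" by (rule assoc_mult_mat[of _ n n _ m _ n]) (use A Q in auto)
  also have "A\<^sup>T * (A * Q) = A\<^sup>T * A * Q"
    by (rule assoc_mult_mat[symmetric, of _ n m _ n _ n]) (use A Q in auto)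
  also have "Q\<^sup>T * (A\<^sup>T * A * Q) = Q\<^sup>T * (A\<^sup>T * A) * Q"
    by (rule assoc_mult_mat[symmetric, of _ n n _ n _ n]) (use A Q in auto)
  finally have GG: "G\<^sup>T * G = mat_diag n d" unfolding D .
  have col_dot: "dot m (\<lambda>r. G $$ (r,i)) (\<lambda>r. G $$ (r,j)) = (if i = j then d i else 0)"
    if "i < n" "j < n" for i j
    unfolding dot_def index_transpose_mult_sum[OF G G that, symmetric] GG using that
    by (simp add: mat_diag_def)
  have "nuc_norm A = (\<Sum>i<n. sqrt (d i))" by (rule nuc_norm_eq_sum_sqrt_diag[OF A Q QQ D])
  also have "\<dots> = (\<Sum>i<n. L2_set (\<lambda>r. G $$ (r,i)) {..<m})"
    by (intro sum.cong) (simp_all add: L2_set_lessThan_eq_sqrt_dot col_dot)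
  finally show thesis
    using that Q QQ col_dot unfolding G_def by auto
qed

lemma normalized_orthogonal_family:
  fixes g u :: "nat \<Rightarrow> nat \<Rightarrow> real"
  assumes orth: "\<And>i k. i < N \<Longrightarrow> k < N \<Longrightarrow> i \<noteq> k \<Longrightarrow> dot m (g i) (g k) = 0"
    and u_def: "\<And>i. u i = (\<lambda>r. g i r / L2_set (g i) {..<m})"
  shows "\<And>i k. i < N \<Longrightarrow> k < N \<Longrightarrow> i \<noteq> k \<Longrightarrow> dot m (u i) (u k) = 0"
    and "\<And>i. dot m (u i) (u i) \<le> 1"
    and "\<And>i. L2_set (g i) {..<m} = dot m (u i) (g i)"
proof -
  fix i k
  assume "i < N" "k < N" "i \<noteq> k"
  then show "dot m (u i) (u k) = 0"
    using orth unfolding u_def dot_def by (simp add: sum_divide_distrib[symmetric])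
next
  fix i
  have "dot m (u i) (u i) = (\<Sum>r<m. (g i r)\<^sup>2) / (L2_set (g i) {..<m})\<^sup>2"
    unfolding u_def dot_def by (simp add: sum_divide_distrib power2_eq_square)
  then show "dot m (u i) (u i) \<le> 1"
    unfolding L2_set_def by (cases "(\<Sum>r<m. (g i r)\<^sup>2) = 0") (simp_all add: sum_nonneg)
next
  fix i
  have "dot m (u i) (g i) = (\<Sum>r<m. (g i r)\<^sup>2) / L2_set (g i) {..<m}"
    unfolding u_def dot_def by (simp add: sum_divide_distrib power2_eq_square)
  then show "L2_set (g i) {..<m} = dot m (u i) (g i)"
    unfolding L2_set_def by (simp add: real_div_sqrt sum_nonneg)
qed

definition outer_decomp ::
    "nat \<Rightarrow> nat \<Rightarrow> real mat \<Rightarrow> 'i set \<Rightarrow> ('i \<Rightarrow> nat \<Rightarrow> real) \<Rightarrow> ('i \<Rightarrow> nat \<Rightarrow> real) \<Rightarrow> bool" where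
  "outer_decomp m n A F x y \<longleftrightarrow> finite F \<and> (\<forall>r<m. \<forall>c<n. A $$ (r,c) = (\<Sum>j\<in>F. x j r * y j c))"

definition outer_cost :: "nat \<Rightarrow> nat \<Rightarrow> 'i set \<Rightarrow> ('i \<Rightarrow> nat \<Rightarrow> real) \<Rightarrow> ('i \<Rightarrow> nat \<Rightarrow> real) \<Rightarrow> real" where
  "outer_cost m n F x y = (\<Sum>j\<in>F. L2_set (x j) {..<m} * L2_set (y j) {..<n})"

lemma outer_cost_nonneg: "outer_cost m n F x y \<ge> 0"
  unfolding outer_cost_def by (simp add: sum_nonneg)

lemma nuc_norm_le_outer_cost:
  fixes A :: "real mat"
  assumes A: "A \<in> carrier_mat m n" and dec: "outer_decomp m n A F x y"
  shows "nuc_norm A \<le> outer_cost m n F x y"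
proof -
  obtain Q where Q: "Q \<in> carrier_mat n n" and QQ: "Q\<^sup>T * Q = 1\<^sub>m n"
    and orth: "\<And>i j. i < n \<Longrightarrow> j < n \<Longrightarrow> i \<noteq> j \<Longrightarrow>
       dot m (\<lambda>r. (A * Q) $$ (r,i)) (\<lambda>r. (A * Q) $$ (r,j)) = 0"
    and nuc: "nuc_norm A = (\<Sum>i<n. L2_set (\<lambda>r. (A * Q) $$ (r,i)) {..<m})"
    using nuc_norm_eq_sum_orthogonal_columns[OF A] by blast
  define g where "g i = (\<lambda>r. (A * Q) $$ (r,i))" for i
  define q where "q i = (\<lambda>c. Q $$ (c,i))" for i
  define u where "u i = (\<lambda>r. g i r / L2_set (g i) {..<m})" for i
  note u = normalized_orthogonal_family[of n m g u, OF orth[folded g_def] u_def]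
  \<comment> \<open>Trace duality: \<open>\<parallel>g i\<parallel> = \<langle>u i, g i\<rangle> = \<Sum>j. \<langle>u i, x j\<rangle> \<langle>y j, q i\<rangle>\<close>; then Cauchy-Schwarz
    over \<open>i\<close> and Bessel's inequality for the orthonormal systems \<open>u\<close> and \<open>q\<close>.\<close>
  have g: "g i r = (\<Sum>j\<in>F. x j r * dot n (y j) (q i))" if "r < m" "i < n" for r i
  proof -
    have "g i r = (\<Sum>c<n. (\<Sum>j\<in>F. x j r * y j c) * Q $$ (c,i))"
      unfolding g_def index_mult_mat_sum[OF A Q that] using dec that
      by (intro sum.cong) (simp_all add: outer_decomp_def)
    then show ?thesis
      unfolding dot_def q_def sum_distrib_right sum_distrib_left
      by (subst (asm) sum.swap) (simp add: mult_ac)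
  qed
  have norm_g: "L2_set (g i) {..<m} = (\<Sum>j\<in>F. dot m (u i) (x j) * dot n (y j) (q i))"
    if "i < n" for i
  proof -
    have "L2_set (g i) {..<m} = dot m (u i) (g i)" by (rule u(3))
    also have "\<dots> = (\<Sum>r<m. \<Sum>j\<in>F. u i r * x j r * dot n (y j) (q i))"
      unfolding dot_def[of m] using that by (intro sum.cong) (simp_all add: g sum_distrib_left mult_ac)
    also have "\<dots> = (\<Sum>j\<in>F. dot m (u i) (x j) * dot n (y j) (q i))"
      unfolding dot_def[of m] sum_distrib_right by (rule sum.swap)
    finally show ?thesis .
  qed
  have q_orthonormal: "dot n (q i) (q k) = of_bool (i = k)" if "i < n" "k < n" for i k
    unfolding dot_def q_def index_transpose_mult_sum[OF Q Q that, symmetric] QQ using that by simp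
  have "nuc_norm A = (\<Sum>j\<in>F. \<Sum>i<n. dot m (u i) (x j) * dot n (q i) (y j))"
    unfolding nuc g_def[symmetric]
    by (subst sum.swap) (simp add: norm_g dot_commute[of n "y _"])
  also have "\<dots> \<le> (\<Sum>j\<in>F. L2_set (\<lambda>i. dot m (u i) (x j)) {..<n} * L2_set (\<lambda>i. dot n (q i) (y j)) {..<n})"
    by (intro sum_mono order_trans[OF _ L2_set_mult_ineq] sum_mono) (simp add: abs_mult[symmetric])
  also have "\<dots> \<le> outer_cost m n F x y"
    unfolding outer_cost_def
    by (intro sum_mono mult_mono bessel_inequality) (simp_all add: u q_orthonormal)
  finally show ?thesis .
qed

lemma outer_decomp_attaining_nuc_norm:
  fixes A :: "real mat"
  assumes A: "A \<in> carrier_mat m n"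
  obtains x y where "outer_decomp m n A {..<n} x y" "outer_cost m n {..<n} x y = nuc_norm A"
proof -
  obtain Q where Q: "Q \<in> carrier_mat n n" and QQ: "Q\<^sup>T * Q = 1\<^sub>m n"
    and nuc: "nuc_norm A = (\<Sum>i<n. L2_set (\<lambda>r. (A * Q) $$ (r,i)) {..<m})"
    by (rule nuc_norm_eq_sum_orthogonal_columns[OF A])
  have "Q * Q\<^sup>T = 1\<^sub>m n" using mat_mult_left_right_inverse[of "Q\<^sup>T" n Q] Q QQ by simp
  then have A_eq: "A * Q * Q\<^sup>T = A" using A Q by (simp add: assoc_mult_mat[of _ m n _ n _ n])
  define x where "x j = (\<lambda>r. (A * Q) $$ (r,j))" for j
  define y where "y j = (\<lambda>c. Q $$ (c,j))" for j
  have "A $$ (r,c) = (\<Sum>j<n. x j r * y j c)" if "r < m" "c < n" for r c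
  proof -
    have "A $$ (r,c) = (A * Q * Q\<^sup>T) $$ (r,c)" unfolding A_eq ..
    also have "\<dots> = (\<Sum>j<n. (A * Q) $$ (r,j) * Q\<^sup>T $$ (j,c))"
      using A Q that by (intro index_mult_mat_sum) auto
    finally show ?thesis using Q that by (simp add: x_def y_def)
  qed
  then have "outer_decomp m n A {..<n} x y" unfolding outer_decomp_def by simp
  moreover have "L2_set (y j) {..<n} = 1" if "j < n" for j
    unfolding L2_set_lessThan_eq_sqrt_dot dot_def y_def
      index_transpose_mult_sum[OF Q Q that that, symmetric] QQ using that by simp
  then have "outer_cost m n {..<n} x y = nuc_norm A"
    unfolding outer_cost_def nuc x_def by simp
  ultimately show thesis by (rule that)
qed

lemma nuc_norm_nonneg: "nuc_norm A \<ge> 0"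
proof -
  have "A \<in> carrier_mat (dim_row A) (dim_col A)" by simp
  then obtain x y where "outer_cost (dim_row A) (dim_col A) {..<dim_col A} x y = nuc_norm A"
    by (rule outer_decomp_attaining_nuc_norm)
  then show ?thesis using outer_cost_nonneg[of "dim_row A" "dim_col A" "{..<dim_col A}" x y] by simp
qed

lemma nuc_norm_zero [simp]: "nuc_norm (0\<^sub>m m n) = 0"
proof -
  have "outer_decomp m n (0\<^sub>m m n) {} (\<lambda>_ _. 0) (\<lambda>_ _. 0)"
    unfolding outer_decomp_def by simp
  then have "nuc_norm (0\<^sub>m m n) \<le> 0"
    using nuc_norm_le_outer_cost[OF zero_carrier_mat] by (fastforce simp: outer_cost_def)
  then show ?thesis using nuc_norm_nonneg by (rule antisym)
qed

lemma nuc_norm_add_le: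
  fixes A B :: "real mat"
  assumes A: "A \<in> carrier_mat m n" and B: "B \<in> carrier_mat m n"
  shows "nuc_norm (A + B) \<le> nuc_norm A + nuc_norm B"
proof -
  obtain x1 y1 where dec1: "outer_decomp m n A {..<n} x1 y1"
    and cost1: "outer_cost m n {..<n} x1 y1 = nuc_norm A"
    using outer_decomp_attaining_nuc_norm[OF A] .
  obtain x2 y2 where dec2: "outer_decomp m n B {..<n} x2 y2"
    and cost2: "outer_cost m n {..<n} x2 y2 = nuc_norm B"
    using outer_decomp_attaining_nuc_norm[OF B] .
  define F where "F = {..<n} <+> {..<n}"
  have "outer_decomp m n (A + B) F (case_sum x1 x2) (case_sum y1 y2)"
    using dec1 dec2 A B unfolding outer_decomp_def F_def by (simp add: sum.Plus o_def)
  then have "nuc_norm (A + B) \<le> outer_cost m n F (case_sum x1 x2) (case_sum y1 y2)"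
    using A B by (intro nuc_norm_le_outer_cost) simp_all
  also have "\<dots> = nuc_norm A + nuc_norm B"
    unfolding F_def outer_cost_def cost1[symmetric] cost2[symmetric] by (simp add: sum.Plus o_def)
  finally show ?thesis .
qed

lemma nuc_norm_smult_le:
  fixes A :: "real mat"
  assumes A: "A \<in> carrier_mat m n"
  shows "nuc_norm (a \<cdot>\<^sub>m A) \<le> \<bar>a\<bar> * nuc_norm A"
proof -
  obtain x y where dec: "outer_decomp m n A {..<n} x y"
    and cost: "outer_cost m n {..<n} x y = nuc_norm A"
    using outer_decomp_attaining_nuc_norm[OF A] .
  have "outer_decomp m n (a \<cdot>\<^sub>m A) {..<n} (\<lambda>j r. a * x j r) y"
    using dec A unfolding outer_decomp_def by (simp add: sum_distrib_left mult.assoc)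
  then have "nuc_norm (a \<cdot>\<^sub>m A) \<le> outer_cost m n {..<n} (\<lambda>j r. a * x j r) y"
    using A by (intro nuc_norm_le_outer_cost) simp_all
  also have "\<dots> = \<bar>a\<bar> * nuc_norm A"
    unfolding outer_cost_def cost[symmetric] L2_set_scale by (simp add: sum_distrib_left mult.assoc)
  finally show ?thesis .
qed

lemma nuc_norm_add_smult_le:
  fixes A B :: "real mat"
  assumes "A \<in> carrier_mat m n" "B \<in> carrier_mat m n" "c > 0"
  shows "nuc_norm (A + (1 / c) \<cdot>\<^sub>m B) \<le> nuc_norm A + nuc_norm B / c"
proof -
  have "nuc_norm (A + (1 / c) \<cdot>\<^sub>m B) \<le> nuc_norm A + nuc_norm ((1 / c) \<cdot>\<^sub>m B)"
    using assms by (intro nuc_norm_add_le) auto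
  also have "nuc_norm ((1 / c) \<cdot>\<^sub>m B) \<le> nuc_norm B / c"
    using nuc_norm_smult_le[OF assms(2), of "1 / c"] assms(3) by simp
  finally show ?thesis by simp
qed

lemma nuc_norm_mask_cols_le:
  fixes Z :: "real mat"
  shows "nuc_norm (mat (dim_row Z) (dim_col Z) (\<lambda>(r,c). if P c then Z $$ (r,c) else 0)) \<le> nuc_norm Z"
proof -
  define m n where "m = dim_row Z" and "n = dim_col Z"
  have Z: "Z \<in> carrier_mat m n" unfolding m_def n_def by simp
  obtain x y where dec: "outer_decomp m n Z {..<n} x y"
    and cost: "outer_cost m n {..<n} x y = nuc_norm Z"
    using outer_decomp_attaining_nuc_norm[OF Z] .
  define y' where "y' j c = (if P c then y j c else 0)" for j c
  have "outer_decomp m n (mat m n (\<lambda>(r,c). if P c then Z $$ (r,c) else 0)) {..<n} x y'"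
    using dec unfolding outer_decomp_def y'_def by simp
  then have "nuc_norm (mat m n (\<lambda>(r,c). if P c then Z $$ (r,c) else 0)) \<le> outer_cost m n {..<n} x y'"
    by (intro nuc_norm_le_outer_cost) simp_all
  also have "\<dots> \<le> outer_cost m n {..<n} x y"
    unfolding outer_cost_def y'_def L2_set_def
    by (intro sum_mono mult_left_mono real_sqrt_le_mono) (simp_all add: sum_nonneg)
  finally show ?thesis using cost by (simp add: m_def n_def)
qed

lemma outer_decomp_mult:
  fixes B Y :: "real mat"
  assumes B: "B \<in> carrier_mat p q" and Y: "Y \<in> carrier_mat q n"
    and dec1: "outer_decomp p q B {..<q} x y" and dec2: "outer_decomp q n Y {..<n} z w"
  shows "outer_decomp p n (B * Y) ({..<q} \<times> {..<n})
    (\<lambda>(j,k) r. dot q (y j) (z k) * x j r) (\<lambda>(j,k). w k)"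
proof -
  have "(B * Y) $$ (r,c) = (\<Sum>j<q. \<Sum>k<n. dot q (y j) (z k) * x j r * w k c)"
    if "r < p" "c < n" for r c
  proof -
    have inner: "(\<Sum>s<q. y j s * Y $$ (s,c)) = (\<Sum>k<n. dot q (y j) (z k) * w k c)" for j
    proof -
      have "(\<Sum>s<q. y j s * Y $$ (s,c)) = (\<Sum>s<q. y j s * (\<Sum>k<n. z k s * w k c))"
        using dec2 that by (intro sum.cong) (simp_all add: outer_decomp_def)
      also have "\<dots> = (\<Sum>k<n. dot q (y j) (z k) * w k c)"
        unfolding dot_def sum_distrib_left sum_distrib_right by (subst sum.swap) (simp add: mult_ac)
      finally show ?thesis .
    qed
    have "(B * Y) $$ (r,c) = (\<Sum>s<q. (\<Sum>j<q. x j r * y j s) * Y $$ (s,c))"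
      unfolding index_mult_mat_sum[OF B Y that] using dec1 that
      by (intro sum.cong) (simp_all add: outer_decomp_def)
    also have "\<dots> = (\<Sum>j<q. x j r * (\<Sum>s<q. y j s * Y $$ (s,c)))"
      unfolding sum_distrib_left sum_distrib_right by (subst sum.swap) (simp add: mult_ac)
    finally show ?thesis unfolding inner by (simp add: sum_distrib_left mult_ac)
  qed
  then show ?thesis unfolding outer_decomp_def by (simp add: sum.cartesian_product')
qed

lemma nuc_norm_mult_le:
  fixes B Y :: "real mat"
  assumes B: "B \<in> carrier_mat p q" and Y: "Y \<in> carrier_mat q n"
  shows "nuc_norm (B * Y) \<le> nuc_norm B * nuc_norm Y"
proof -
  obtain x y where dec1: "outer_decomp p q B {..<q} x y"
    and cost1: "outer_cost p q {..<q} x y = nuc_norm B"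
    using outer_decomp_attaining_nuc_norm[OF B] .
  obtain z w where dec2: "outer_decomp q n Y {..<n} z w"
    and cost2: "outer_cost q n {..<n} z w = nuc_norm Y"
    using outer_decomp_attaining_nuc_norm[OF Y] .
  have "nuc_norm (B * Y)
      \<le> outer_cost p n ({..<q} \<times> {..<n}) (\<lambda>(j,k) r. dot q (y j) (z k) * x j r) (\<lambda>(j,k). w k)"
    using B Y by (intro nuc_norm_le_outer_cost outer_decomp_mult[OF B Y dec1 dec2]) simp
  also have "\<dots> = (\<Sum>j<q. \<Sum>k<n. \<bar>dot q (y j) (z k)\<bar> * L2_set (x j) {..<p} * L2_set (w k) {..<n})"
    unfolding outer_cost_def sum.cartesian_product' by (simp add: L2_set_scale)
  also have "\<dots> \<le> (\<Sum>j<q. \<Sum>k<n. (L2_set (y j) {..<q} * L2_set (z k) {..<q})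
      * L2_set (x j) {..<p} * L2_set (w k) {..<n})"
    by (intro sum_mono mult_right_mono abs_dot_le_L2_set) simp_all
  also have "\<dots> = nuc_norm B * nuc_norm Y"
    unfolding cost1[symmetric] cost2[symmetric] outer_cost_def sum_product
    by (simp add: mult_ac)
  finally show ?thesis .
qed

section \<open>Column blocks\<close>

lemma in_block_unique:
  assumes "in_block nj j s" "in_block nj j' s"
  shows "j = j'"
proof (rule ccontr)
  have less: "(\<Sum>i<Suc a. nj i) \<le> (\<Sum>i<b. nj i)" if "a < b" for a b
    using that by (intro sum_mono2) auto
  assume "j \<noteq> j'"
  then consider "j < j'" | "j' < j" by linarith
  then show False
  proof cases
    case 1
    then show False using assms less[OF 1] unfolding in_block_def by linarith
  next
    case 2
    then show False using assms less[OF 2] unfolding in_block_def by linarith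
  qed
qed

lemma in_block_exists:
  "s < (\<Sum>j<J. nj j) \<Longrightarrow> \<exists>j<J. in_block nj j s"
proof (induction J)
  case (Suc J)
  show ?case
  proof (cases "s < (\<Sum>j<J. nj j)")
    case True
    then show ?thesis using Suc.IH less_SucI by blast
  next
    case False
    then have "in_block nj J s" using Suc.prems unfolding in_block_def by simp
    then show ?thesis by blast
  qed
qed simp

lemma mod_data_carrier [simp]:
  "dim_row (mod_data J nj C k Z) = dim_row Z" "dim_col (mod_data J nj C k Z) = dim_col Z"
  "Z \<in> carrier_mat m n \<Longrightarrow> mod_data J nj C k Z \<in> carrier_mat m n"
  unfolding mod_data_def by auto

lemma index_mod_data:
  assumes "r < dim_row Z" "c < dim_col Z" "j < J" "in_block nj j c"
  shows "mod_data J nj C k Z $$ (r,c) = (if C j k = 1 then Z $$ (r,c) else 0)"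
proof -
  have "(\<exists>j'<J. in_block nj j' c \<and> C j' k = 1) \<longleftrightarrow> C j k = 1"
    using assms in_block_unique[of nj _ c j] by blast
  then show ?thesis unfolding mod_data_def using assms by simp
qed

lemma mult_mask_cols:
  assumes "B \<in> carrier_mat p q" "Z \<in> carrier_mat q n"
  shows "B * mat q n (\<lambda>(r,s). if P s then Z $$ (r,s) else 0)
    = mat p n (\<lambda>(r,s). if P s then (B * Z) $$ (r,s) else 0)"
proof (rule eq_matI)
  fix r s assume "r < dim_row (mat p n (\<lambda>(r,s). if P s then (B * Z) $$ (r,s) else 0))"
    "s < dim_col (mat p n (\<lambda>(r,s). if P s then (B * Z) $$ (r,s) else 0))"
  then have r: "r < p" and s: "s < n" by auto
  show "(B * mat q n (\<lambda>(r,s). if P s then Z $$ (r,s) else 0)) $$ (r,s)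
    = mat p n (\<lambda>(r,s). if P s then (B * Z) $$ (r,s) else 0) $$ (r,s)"
    unfolding index_mult_mat_sum[OF assms(1) mat_carrier r s] using assms r s
    by (cases "P s") (simp_all add: index_mult_mat_sum[OF assms r s] del: index_mult_mat)
qed (use assms in auto)

lemma mult_mod_data:
  assumes "B \<in> carrier_mat p q" "Z \<in> carrier_mat q n"
  shows "B * mod_data J nj C k Z = mod_data J nj C k (B * Z)"
  using assms unfolding mod_data_def by (simp add: mult_mask_cols)

lemma mod_data_idem: "mod_data J nj C k (mod_data J nj C k Z) = mod_data J nj C k Z"
  by (intro eq_matI) (auto simp: mod_data_def)

lemma nuc_norm_mod_data_le: "nuc_norm (mod_data J nj C k Z) \<le> nuc_norm Z"
  unfolding mod_data_def by (rule nuc_norm_mask_cols_le)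

lemma nuc_norm_add_smult_mod_data_le:
  fixes A Z :: "real mat"
  assumes "A \<in> carrier_mat m n" "Z \<in> carrier_mat m n" "c > 0"
  shows "nuc_norm (A + (1 / c) \<cdot>\<^sub>m mod_data J nj C i Z) \<le> nuc_norm A + nuc_norm Z / c"
proof -
  have "nuc_norm (A + (1 / c) \<cdot>\<^sub>m mod_data J nj C i Z) \<le> nuc_norm A + nuc_norm (mod_data J nj C i Z) / c"
    by (rule nuc_norm_add_smult_le[OF assms(1) mod_data_carrier(3)[OF assms(2)] assms(3)])
  also have "\<dots> \<le> nuc_norm A + nuc_norm Z / c"
    using assms(3) nuc_norm_mod_data_le by (simp add: divide_right_mono)
  finally show ?thesis .
qed

lemma sum_index_mod_data:
  fixes Z :: "real mat"
  assumes s: "s < (\<Sum>j<J. nj j)" "s < dim_col Z" and r: "r < dim_row Z"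
    and cover: "\<forall>j<J. (\<Sum>i\<in>I. C' j i) = c * C j k"
    and C'_01: "\<forall>j<J. \<forall>i\<in>I. C' j i \<in> {0,1}" and C_01: "\<forall>j<J. C j k \<in> {0,1}"
  shows "(\<Sum>i\<in>I. mod_data J nj C' i Z $$ (r,s)) = real c * mod_data J nj C k Z $$ (r,s)"
proof -
  obtain j where j: "j < J" "in_block nj j s" using in_block_exists[OF s(1)] by blast
  have "(\<Sum>i\<in>I. mod_data J nj C' i Z $$ (r,s)) = (\<Sum>i\<in>I. real (C' j i)) * Z $$ (r,s)"
    unfolding sum_distrib_right using index_mod_data[OF r s(2) j] C'_01 j
    by (intro sum.cong) auto
  also have "(\<Sum>i\<in>I. real (C' j i)) = real c * real (C j k)"
    using cover j by (metis of_nat_mult of_nat_sum)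
  also have "real c * real (C j k) * Z $$ (r,s) = real c * mod_data J nj C k Z $$ (r,s)"
    using index_mod_data[OF r s(2) j] C_01 j by auto
  finally show ?thesis .
qed

lemma S_set_zero: "0\<^sub>m p n \<in> S_set p n J nj C l"
  unfolding S_set_def by simp

lemma S_set_add: "S \<in> S_set p n J nj C l \<Longrightarrow> T \<in> S_set p n J nj C l \<Longrightarrow> S + T \<in> S_set p n J nj C l"
  unfolding S_set_def by auto

lemma S_set_smult: "S \<in> S_set p n J nj C l \<Longrightarrow> a \<cdot>\<^sub>m S \<in> S_set p n J nj C l"
  unfolding S_set_def by auto

lemma S_set_mono:
  "(\<And>j. j < J \<Longrightarrow> C j l = 0 \<Longrightarrow> C j l' = 0) \<Longrightarrow> S_set p n J nj C l' \<subseteq> S_set p n J nj C l"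
  unfolding S_set_def by auto

lemma mod_data_in_S_set: "Z \<in> carrier_mat p n \<Longrightarrow> mod_data J nj C l Z \<in> S_set p n J nj C l"
  unfolding S_set_def using index_mod_data[of _ Z _ _ J nj C l] by auto

lemma mod_data_of_S_set:
  assumes "S \<in> S_set p n J nj C l" "n = (\<Sum>j<J. nj j)" "\<forall>j<J. C j l \<in> {0,1}"
  shows "mod_data J nj C l S = S"
proof (rule eq_matI)
  fix r s assume "r < dim_row S" "s < dim_col S"
  moreover obtain j where "j < J" "in_block nj j s"
    using in_block_exists[of s nj J] assms(1,2) calculation by (auto simp: S_set_def)
  ultimately show "mod_data J nj C l S $$ (r,s) = S $$ (r,s)"
    using index_mod_data[of r S s j J nj C l] assms(1,3) by (auto simp: S_set_def)
qed simp_all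

section \<open>Switching off a module\<close>

lemma sum_eq_add_on_subset:
  fixes g g' h :: "'a \<Rightarrow> real"
  assumes "finite A" "I \<subseteq> A"
    and "\<And>i. i \<in> I \<Longrightarrow> g' i = g i + h i" and "\<And>i. i \<in> A - I \<Longrightarrow> g' i = g i"
  shows "sum g' A = sum g A + sum h I"
proof -
  have "sum g' A = (\<Sum>i\<in>A. g i + (if i \<in> I then h i else 0))"
    using assms(3,4) by (intro sum.cong) auto
  also have "\<dots> = sum g A + sum h I"
    using assms(1,2) by (simp add: sum.distrib Int_absorb1 flip: sum.inter_restrict)
  finally show ?thesis .
qed

lemma sum_le_add_on_subset:
  fixes g g' h :: "'a \<Rightarrow> real"
  assumes "finite A" "I \<subseteq> A"
    and "\<And>i. i \<in> I \<Longrightarrow> g' i \<le> g i + h i" and "\<And>i. i \<in> A - I \<Longrightarrow> g' i \<le> g i"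
  shows "sum g' A \<le> sum g A + sum h I"
proof -
  have "sum g' A \<le> (\<Sum>i\<in>A. g i + (if i \<in> I then h i else 0))"
    using assms(3,4) by (intro sum_mono) auto
  also have "\<dots> = sum g A + sum h I"
    using assms(1,2) by (simp add: sum.distrib Int_absorb1 flip: sum.inter_restrict)
  finally show ?thesis .
qed

lemma sum_update_outside:
  assumes "finite I" "k \<notin> I"
  shows "sum (h(k := a)) (insert k I) = a + sum h I"
proof -
  have "sum (h(k := a)) I = sum h I" using assms(2) by (intro sum.cong) auto
  then show ?thesis using assms by simp
qed

lemma sum_eq_redistribute:
  fixes g g' h :: "'a \<Rightarrow> real"
  assumes "finite A" "k \<in> A" "I \<subseteq> A - {k}"
    and "g' k = 0" "\<And>i. i \<in> I \<Longrightarrow> g' i = g i + h i"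
    and "\<And>i. i \<in> A - insert k I \<Longrightarrow> g' i = g i" and "sum h I = g k"
  shows "sum g' A = sum g A"
proof -
  have "sum g' A = sum g A + sum (h(k := - g k)) (insert k I)"
    using assms(1-6) by (intro sum_eq_add_on_subset) auto
  also have "sum (h(k := - g k)) (insert k I) = 0"
    using assms(1,3,7) finite_subset by (subst sum_update_outside) auto
  finally show ?thesis by simp
qed

lemma sum_le_redistribute:
  fixes g g' h :: "'a \<Rightarrow> real"
  assumes "finite A" "k \<in> A" "I \<subseteq> A - {k}"
    and "g' k \<le> 0" "\<And>i. i \<in> I \<Longrightarrow> g' i \<le> g i + h i"
    and "\<And>i. i \<in> A - insert k I \<Longrightarrow> g' i \<le> g i" and "sum h I \<le> g k"
  shows "sum g' A \<le> sum g A"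
proof -
  have "sum g' A \<le> sum g A + sum (h(k := - g k)) (insert k I)"
    using assms(1-6) by (intro sum_le_add_on_subset) auto
  also have "sum (h(k := - g k)) (insert k I) \<le> 0"
    using assms(1,3,7) finite_subset by (subst sum_update_outside) auto
  finally show ?thesis by simp
qed

locale cohort_model =
  fixes p q n J :: nat and nj :: "nat \<Rightarrow> nat" and K L :: nat
    and CY CS :: "nat \<Rightarrow> nat \<Rightarrow> nat" and X Y :: "real mat"
    and lamB lamS :: "nat \<Rightarrow> real"
  assumes n_eq: "n = (\<Sum>j<J. nj j)" and Y: "Y \<in> carrier_mat q n"
    and CY_01: "\<forall>j<J. \<forall>k<K. CY j k \<in> {0,1}"
    and CS_01: "\<forall>j<J. \<forall>l<L. CS j l \<in> {0,1}"
    and lamB_nonneg: "\<And>k. k < K \<Longrightarrow> lamB k \<ge> 0"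
    and lamS_nonneg: "\<And>l. l < L \<Longrightarrow> lamS l \<ge> 0"
begin

abbreviation "minimizer \<equiv> is_minimizer p q n J nj K L CY CS X Y lamB lamS"
abbreviation "objective \<equiv> obj p n J nj K L CY X Y lamB lamS"
abbreviation "feas \<equiv> feasible p q n J nj K L CS"

definition fit :: "(nat \<Rightarrow> real mat) \<Rightarrow> (nat \<Rightarrow> real mat) \<Rightarrow> nat \<Rightarrow> nat \<Rightarrow> real" where
  "fit B S r s = (\<Sum>k<K. (B k * mod_data J nj CY k Y) $$ (r,s)) + (\<Sum>l<L. S l $$ (r,s))"

definition penalty :: "(nat \<Rightarrow> real mat) \<Rightarrow> (nat \<Rightarrow> real mat) \<Rightarrow> real" where
  "penalty B S = (\<Sum>k<K. lamB k * nuc_norm (B k)) + (\<Sum>l<L. lamS l * nuc_norm (S l))"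

lemma exists_minimizer_of_same_fit:
  assumes min: "minimizer B S" and feas: "feas B' S'"
    and fit: "\<And>r s. r < p \<Longrightarrow> s < n \<Longrightarrow> fit B' S' r s = fit B S r s"
    and pen: "penalty B' S' \<le> penalty B S" and "P B' S'"
  shows "\<exists>B' S'. minimizer B' S' \<and> objective B' S' \<le> objective B S \<and> P B' S'"
proof -
  have "mat p n (\<lambda>(r,s). X $$ (r,s) - (\<Sum>k<K. (B' k * mod_data J nj CY k Y) $$ (r,s))
      - (\<Sum>l<L. S' l $$ (r,s)))
    = mat p n (\<lambda>(r,s). X $$ (r,s) - (\<Sum>k<K. (B k * mod_data J nj CY k Y) $$ (r,s))
      - (\<Sum>l<L. S l $$ (r,s)))"
    using fit unfolding fit_def by (intro eq_matI) (auto simp: diff_diff_eq)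
  then have "objective B' S' \<le> objective B S"
    using pen unfolding obj_def penalty_def by simp
  moreover have "minimizer B' S'"
    using min feas calculation unfolding is_minimizer_def by (meson order_trans)
  ultimately show ?thesis using \<open>P B' S'\<close> by blast
qed

lemma minimizer_carrier:
  assumes "minimizer B S"
  shows "\<And>k. k < K \<Longrightarrow> B k \<in> carrier_mat p q" and "\<And>l. l < L \<Longrightarrow> S l \<in> S_set p n J nj CS l"
    and "\<And>l. l < L \<Longrightarrow> S l \<in> carrier_mat p n"
  using assms unfolding is_minimizer_def feasible_def S_set_def by auto

lemma zero_B_module_via_B_modules:
  assumes min: "minimizer B S" and k: "k < K" and I: "I \<subseteq> {..<K} - {k}" and c: "c > 0"
    and cover: "\<forall>j<J. (\<Sum>i\<in>I. CY j i) = c * CY j k"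
    and lam: "lamB k \<ge> (\<Sum>i\<in>I. lamB i) / real c"
  shows "\<exists>B' S'. minimizer B' S' \<and> objective B' S' \<le> objective B S \<and> B' k = 0\<^sub>m p q"
proof -
  note B = minimizer_carrier(1)[OF min]
  have kI: "k \<notin> I" and IK: "I \<subseteq> {..<K}" using I by auto
  define B' where
    "B' i = (if i \<in> I then B i + (1 / real c) \<cdot>\<^sub>m B k else if i = k then 0\<^sub>m p q else B i)" for i
  have feas: "feas B' S"
    using min B IK k unfolding is_minimizer_def feasible_def B'_def by auto
  have "fit B' S r s = fit B S r s" if r: "r < p" and s: "s < n" for r s
  proof -
    have "(\<Sum>i\<in>I. mod_data J nj CY i (B k * Y) $$ (r,s))
        = real c * mod_data J nj CY k (B k * Y) $$ (r,s)"
      using r s n_eq Y B[OF k] CY_01 k IK cover by (intro sum_index_mod_data) auto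
    then have "(\<Sum>i\<in>I. (B k * mod_data J nj CY i Y) $$ (r,s) / real c)
        = (B k * mod_data J nj CY k Y) $$ (r,s)"
      using c by (simp add: mult_mod_data[OF B[OF k] Y] sum_divide_distrib[symmetric])
    then have "(\<Sum>i<K. (B' i * mod_data J nj CY i Y) $$ (r,s))
        = (\<Sum>i<K. (B i * mod_data J nj CY i Y) $$ (r,s))"
      using k I r s Y B IK
      by (intro sum_eq_redistribute[where h = "\<lambda>i. (B k * mod_data J nj CY i Y) $$ (r,s) / real c"])
        (auto simp: B'_def index_add_smult_mult_mat[of _ p q _ _ n] subsetD)
    then show ?thesis unfolding fit_def by simp
  qed
  moreover have "penalty B' S \<le> penalty B S"
  proof -
    have "lamB i * nuc_norm (B' i) \<le> lamB i * nuc_norm (B i) + lamB i * nuc_norm (B k) / real c"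
      if "i \<in> I" for i
    proof -
      have i: "i < K" using that IK by auto
      have "nuc_norm (B' i) \<le> nuc_norm (B i) + nuc_norm (B k) / real c"
        using nuc_norm_add_smult_le[OF B[OF i] B[OF k]] c that by (simp add: B'_def)
      from mult_left_mono[OF this lamB_nonneg[OF i]] show ?thesis by (simp add: distrib_left)
    qed
    moreover have "(\<Sum>i\<in>I. lamB i * nuc_norm (B k) / real c) \<le> lamB k * nuc_norm (B k)"
      using mult_right_mono[OF lam nuc_norm_nonneg[of "B k"]]
      by (simp add: sum_divide_distrib[symmetric] sum_distrib_right[symmetric])
    ultimately have "(\<Sum>i<K. lamB i * nuc_norm (B' i)) \<le> (\<Sum>i<K. lamB i * nuc_norm (B i))"
      using k I by (intro sum_le_redistribute[where h = "\<lambda>i. lamB i * nuc_norm (B k) / real c"])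
        (auto simp: B'_def)
    then show ?thesis unfolding penalty_def by simp
  qed
  ultimately show ?thesis
    using kI by (intro exists_minimizer_of_same_fit[OF min feas]) (simp_all add: B'_def)
qed

lemma zero_B_module_via_S_modules:
  assumes min: "minimizer B S" and k: "k < K" and I: "I \<subseteq> {..<L}" and c: "c > 0"
    and cover: "\<forall>j<J. (\<Sum>i\<in>I. CS j i) = c * CY j k"
    and lam: "lamB k \<ge> (\<Sum>i\<in>I. lamS i * nuc_norm (mod_data J nj CY k Y)) / real c"
  shows "\<exists>B' S'. minimizer B' S' \<and> objective B' S' \<le> objective B S \<and> B' k = 0\<^sub>m p q"
proof -
  note B = minimizer_carrier(1)[OF min] and S = minimizer_carrier(2,3)[OF min]
  define Z where "Z = B k * mod_data J nj CY k Y"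
  have Z: "Z \<in> carrier_mat p n" unfolding Z_def using B[OF k] Y by simp
  have SI: "S i \<in> carrier_mat p n" if "i \<in> I" for i using S(2) I that by auto
  define B' where "B' = B(k := 0\<^sub>m p q)"
  define S' where "S' i = (if i \<in> I then S i + (1 / real c) \<cdot>\<^sub>m mod_data J nj CS i Z else S i)" for i
  have feas: "feas B' S'"
    using B S(1) Z unfolding feasible_def B'_def S'_def
    by (auto intro: S_set_add S_set_smult mod_data_in_S_set)
  have "fit B' S' r s = fit B S r s" if r: "r < p" and s: "s < n" for r s
  proof -
    have "(\<Sum>i\<in>I. mod_data J nj CS i Z $$ (r,s)) = real c * mod_data J nj CY k Z $$ (r,s)"
      using r s n_eq Z CS_01 CY_01 k I cover by (intro sum_index_mod_data) (auto simp: subset_iff)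
    also have "mod_data J nj CY k Z = Z"
      unfolding Z_def mult_mod_data[OF B[OF k] Y] mod_data_idem ..
    finally have "(\<Sum>i\<in>I. mod_data J nj CS i Z $$ (r,s) / real c) = Z $$ (r,s)"
      using c by (simp add: sum_divide_distrib[symmetric])
    moreover have "(\<Sum>i<L. S' i $$ (r,s))
        = (\<Sum>i<L. S i $$ (r,s)) + (\<Sum>i\<in>I. mod_data J nj CS i Z $$ (r,s) / real c)"
      using I r s SI Z by (intro sum_eq_add_on_subset) (auto simp: S'_def)
    moreover have "(\<Sum>i<K. (B' i * mod_data J nj CY i Y) $$ (r,s))
        = (\<Sum>i<K. (B i * mod_data J nj CY i Y) $$ (r,s)) + (\<Sum>i\<in>{k}. - Z $$ (r,s))"
      using k r s Y by (intro sum_eq_add_on_subset) (auto simp: B'_def Z_def)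
    ultimately show ?thesis unfolding fit_def by simp
  qed
  moreover have "penalty B' S' \<le> penalty B S"
  proof -
    define N where "N = nuc_norm (mod_data J nj CY k Y) * nuc_norm (B k) / real c"
    have "nuc_norm Z \<le> nuc_norm (B k) * nuc_norm (mod_data J nj CY k Y)"
      unfolding Z_def by (rule nuc_norm_mult_le[OF B[OF k] mod_data_carrier(3)[OF Y]])
    then have Z_N: "nuc_norm Z / real c \<le> N"
      unfolding N_def using c by (simp add: divide_right_mono mult.commute)
    have "lamS i * nuc_norm (S' i) \<le> lamS i * nuc_norm (S i) + lamS i * N" if "i \<in> I" for i
    proof -
      have i: "i < L" using that I by auto
      have "nuc_norm (S' i) \<le> nuc_norm (S i) + N"
        using order_trans[OF nuc_norm_add_smult_mod_data_le[OF S(2)[OF i] Z] add_left_mono[OF Z_N]] c that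
        by (simp add: S'_def)
      from mult_left_mono[OF this lamS_nonneg[OF i]] show ?thesis by (simp add: distrib_left)
    qed
    then have "(\<Sum>i<L. lamS i * nuc_norm (S' i)) \<le> (\<Sum>i<L. lamS i * nuc_norm (S i)) + (\<Sum>i\<in>I. lamS i * N)"
      using I by (intro sum_le_add_on_subset) (auto simp: S'_def)
    moreover have "(\<Sum>i\<in>I. lamS i * N)
        = (\<Sum>i\<in>I. lamS i * nuc_norm (mod_data J nj CY k Y)) / real c * nuc_norm (B k)"
      unfolding N_def sum_divide_distrib sum_distrib_right by (intro sum.cong) simp_all
    moreover note mult_right_mono[OF lam nuc_norm_nonneg[of "B k"]]
    moreover have "(\<Sum>i<K. lamB i * nuc_norm (B' i))
        = (\<Sum>i<K. lamB i * nuc_norm (B i)) + (\<Sum>i\<in>{k}. - (lamB k * nuc_norm (B k)))"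
      using k by (intro sum_eq_add_on_subset) (auto simp: B'_def)
    ultimately show ?thesis unfolding penalty_def by simp
  qed
  ultimately show ?thesis by (intro exists_minimizer_of_same_fit[OF min feas]) (simp_all add: B'_def)
qed

lemma zero_S_module_via_larger_S_module:
  assumes min: "minimizer B S" and l: "l < L" "l' < L" "l \<noteq> l'"
    and larger: "\<forall>j<J. CS j l' \<le> CS j l" and lam: "lamS l \<le> lamS l'"
  shows "\<exists>B' S'. minimizer B' S' \<and> objective B' S' \<le> objective B S \<and> S' l' = 0\<^sub>m p n"
proof -
  note S = minimizer_carrier(2,3)[OF min]
  define S' where "S' = S(l := S l + S l', l' := 0\<^sub>m p n)"
  have "S l' \<in> S_set p n J nj CS l"
    using S(1)[OF l(2)] S_set_mono[of J CS l l' p n nj] larger by fastforce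
  then have feas: "feas B S'"
    using min l S(1) unfolding is_minimizer_def feasible_def S'_def
    by (auto intro: S_set_add S_set_zero)
  have "fit B S' r s = fit B S r s" if "r < p" "s < n" for r s
  proof -
    have "(\<Sum>i<L. S' i $$ (r,s)) = (\<Sum>i<L. S i $$ (r,s))"
      using l that S(2)[OF l(1)] S(2)[OF l(2)]
      by (intro sum_eq_redistribute[where k = l' and I = "{l}" and h = "\<lambda>_. S l' $$ (r,s)"])
        (auto simp: S'_def)
    then show ?thesis unfolding fit_def by simp
  qed
  moreover have "penalty B S' \<le> penalty B S"
  proof -
    have "lamS l * nuc_norm (S l + S l') \<le> lamS l * (nuc_norm (S l) + nuc_norm (S l'))"
      using l lamS_nonneg by (intro mult_left_mono nuc_norm_add_le[OF S(2)[OF l(1)] S(2)[OF l(2)]]) auto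
    also have "\<dots> \<le> lamS l * nuc_norm (S l) + lamS l' * nuc_norm (S l')"
      using lam nuc_norm_nonneg[of "S l'"] by (simp add: distrib_left mult_right_mono)
    finally have "(\<Sum>i<L. lamS i * nuc_norm (S' i)) \<le> (\<Sum>i<L. lamS i * nuc_norm (S i))"
      using l
      by (intro sum_le_redistribute[where k = l' and I = "{l}" and h = "\<lambda>_. lamS l' * nuc_norm (S l')"])
        (auto simp: S'_def)
    then show ?thesis unfolding penalty_def by simp
  qed
  ultimately show ?thesis by (intro exists_minimizer_of_same_fit[OF min feas]) (simp_all add: S'_def)
qed

lemma zero_S_module_via_S_modules:
  assumes min: "minimizer B S" and l: "l < L" and I: "I \<subseteq> {..<L} - {l}" and c: "c > 0"
    and cover: "\<forall>j<J. (\<Sum>i\<in>I. CS j i) = c * CS j l"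
    and lam: "lamS l \<ge> (\<Sum>i\<in>I. lamS i) / real c"
  shows "\<exists>B' S'. minimizer B' S' \<and> objective B' S' \<le> objective B S \<and> S' l = 0\<^sub>m p n"
proof -
  note S = minimizer_carrier(2,3)[OF min]
  have lI: "l \<notin> I" and IL: "I \<subseteq> {..<L}" using I by auto
  note SI = S(2)[OF subsetD[OF IL, simplified]]
  define S' where "S' i = (if i \<in> I then S i + (1 / real c) \<cdot>\<^sub>m mod_data J nj CS i (S l)
    else if i = l then 0\<^sub>m p n else S i)" for i
  have "S' i \<in> S_set p n J nj CS i" if "i < L" for i
    using S_set_add[OF S(1)[OF that] S_set_smult[OF mod_data_in_S_set[OF S(2)[OF l]]]]
      S(1)[OF that] S_set_zero by (simp add: S'_def)
  then have feas: "feas B S'"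
    using min unfolding is_minimizer_def feasible_def by simp
  have "fit B S' r s = fit B S r s" if r: "r < p" and s: "s < n" for r s
  proof -
    have "(\<Sum>i\<in>I. mod_data J nj CS i (S l) $$ (r,s)) = real c * mod_data J nj CS l (S l) $$ (r,s)"
      using r s n_eq S(2)[OF l] CS_01 l IL cover by (intro sum_index_mod_data) auto
    also have "mod_data J nj CS l (S l) = S l"
      using S(1)[OF l] n_eq CS_01 l by (intro mod_data_of_S_set) auto
    finally have "(\<Sum>i\<in>I. mod_data J nj CS i (S l) $$ (r,s) / real c) = S l $$ (r,s)"
      using c by (simp add: sum_divide_distrib[symmetric])
    moreover have "S' i $$ (r,s) = S i $$ (r,s) + mod_data J nj CS i (S l) $$ (r,s) / real c"
      if "i \<in> I" for i
      using that SI[OF that] S(2)[OF l] r s by (simp add: S'_def)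
    ultimately have "(\<Sum>i<L. S' i $$ (r,s)) = (\<Sum>i<L. S i $$ (r,s))"
      using l I r s
      by (intro sum_eq_redistribute[where h = "\<lambda>i. mod_data J nj CS i (S l) $$ (r,s) / real c"])
        (auto simp: S'_def)
    then show ?thesis unfolding fit_def by simp
  qed
  moreover have "penalty B S' \<le> penalty B S"
  proof -
    have "lamS i * nuc_norm (S' i) \<le> lamS i * nuc_norm (S i) + lamS i * nuc_norm (S l) / real c"
      if "i \<in> I" for i
    proof -
      have i: "i < L" using that IL by auto
      have "nuc_norm (S' i) \<le> nuc_norm (S i) + nuc_norm (S l) / real c"
        using nuc_norm_add_smult_mod_data_le[OF S(2)[OF i] S(2)[OF l], of "real c"] c that
        by (simp add: S'_def)
      from mult_left_mono[OF this lamS_nonneg[OF i]] show ?thesis by (simp add: distrib_left)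
    qed
    moreover have "(\<Sum>i\<in>I. lamS i * nuc_norm (S l) / real c) \<le> lamS l * nuc_norm (S l)"
      using mult_right_mono[OF lam nuc_norm_nonneg[of "S l"]]
      by (simp add: sum_divide_distrib[symmetric] sum_distrib_right[symmetric])
    ultimately have "(\<Sum>i<L. lamS i * nuc_norm (S' i)) \<le> (\<Sum>i<L. lamS i * nuc_norm (S i))"
      using l I by (intro sum_le_redistribute[where h = "\<lambda>i. lamS i * nuc_norm (S l) / real c"])
        (auto simp: S'_def)
    then show ?thesis unfolding penalty_def by simp
  qed
  ultimately show ?thesis using lI by (intro exists_minimizer_of_same_fit[OF min feas]) (simp_all add: S'_def)
qed

end

theorem proposition1:
  fixes J K L p q n :: nat and nj :: "nat \<Rightarrow> nat"
    and X Y :: "real mat" and CY CS :: "nat \<Rightarrow> nat \<Rightarrow> nat"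
    and lamB lamS :: "nat \<Rightarrow> real"
  assumes "J \<ge> 1" and "p \<ge> 1" and "q \<ge> 1"
    and "\<forall>j<J. nj j \<ge> 1"
    and "n = (\<Sum>j<J. nj j)"
    and "X \<in> carrier_mat p n" and "Y \<in> carrier_mat q n"
    and "\<forall>j<J. \<forall>k<K. CY j k \<in> {0,1}"
    and "\<forall>j<J. \<forall>l<L. CS j l \<in> {0,1}"
    and "\<forall>k<K. lamB k > 0" and "\<forall>l<L. lamS l > 0"
  shows
  \<comment> \<open>1. failure of condition 1 for module B_k\<close>
  "(\<forall>k<K. (\<exists>I (c::nat). I \<subseteq> {..<K} - {k} \<and> c > 0 \<and>
          (\<forall>j<J. (\<Sum>i\<in>I. CY j i) = c * CY j k) \<and>
          lamB k \<ge> (\<Sum>i\<in>I. lamB i) / real c) \<longrightarrow>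
       (\<forall>B S. is_minimizer p q n J nj K L CY CS X Y lamB lamS B S \<longrightarrow>
          (\<exists>B' S'. is_minimizer p q n J nj K L CY CS X Y lamB lamS B' S' \<and>
             obj p n J nj K L CY X Y lamB lamS B' S' \<le> obj p n J nj K L CY X Y lamB lamS B S \<and>
             B' k = 0\<^sub>m p q)))
   \<and>
  \<comment> \<open>2. failure of condition 2 for module B_k\<close>
   (\<forall>k<K. (\<exists>I (c::nat). I \<subseteq> {..<L} \<and> c > 0 \<and>
          (\<forall>j<J. (\<Sum>i\<in>I. CS j i) = c * CY j k) \<and>
          lamB k \<ge> (\<Sum>i\<in>I. lamS i * nuc_norm (mod_data J nj CY k Y)) / real c) \<longrightarrow>
       (\<forall>B S. is_minimizer p q n J nj K L CY CS X Y lamB lamS B S \<longrightarrow>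
          (\<exists>B' S'. is_minimizer p q n J nj K L CY CS X Y lamB lamS B' S' \<and>
             obj p n J nj K L CY X Y lamB lamS B' S' \<le> obj p n J nj K L CY X Y lamB lamS B S \<and>
             B' k = 0\<^sub>m p q)))
   \<and>
  \<comment> \<open>3. failure of condition 3 for module S^(l')\<close>
   (\<forall>l<L. \<forall>l'<L. (l \<noteq> l' \<and> (\<forall>j<J. CS j l \<ge> CS j l') \<and> lamS l' \<ge> lamS l) \<longrightarrow>
       (\<forall>B S. is_minimizer p q n J nj K L CY CS X Y lamB lamS B S \<longrightarrow>
          (\<exists>B' S'. is_minimizer p q n J nj K L CY CS X Y lamB lamS B' S' \<and>
             obj p n J nj K L CY X Y lamB lamS B' S' \<le> obj p n J nj K L CY X Y lamB lamS B S \<and>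
             S' l' = 0\<^sub>m p n)))
   \<and>
  \<comment> \<open>4. failure of condition 4 for module S^(l)\<close>
   (\<forall>l<L. (\<exists>I (c::nat). I \<subseteq> {..<L} - {l} \<and> c > 0 \<and>
          (\<forall>j<J. (\<Sum>i\<in>I. CS j i) = c * CS j l) \<and>
          lamS l \<ge> (\<Sum>i\<in>I. lamS i) / real c) \<longrightarrow>
       (\<forall>B S. is_minimizer p q n J nj K L CY CS X Y lamB lamS B S \<longrightarrow>
          (\<exists>B' S'. is_minimizer p q n J nj K L CY CS X Y lamB lamS B' S' \<and>
             obj p n J nj K L CY X Y lamB lamS B' S' \<le> obj p n J nj K L CY X Y lamB lamS B S \<and>
             S' l = 0\<^sub>m p n)))"
proof -
  interpret cohort_model p q n J nj K L CY CS X Y lamB lamS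
    using assms by unfold_locales auto
  show ?thesis
    by (intro conjI allI impI; elim exE conjE)
      (blast intro: zero_B_module_via_B_modules zero_B_module_via_S_modules
        zero_S_module_via_larger_S_module zero_S_module_via_S_modules)+
qed

end
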